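(* Let $\mathbb{F}_q$ be a finite field and let $\mathcal{Q}=\mathbb{F}_q^3$ with the relation: $(x_1,y_1,z_1)$ and $(x_2,y_2,z_2)$ commute iff $x_1y_2-y_1x_2=z_1-z_2$. Then there exist three lines $L_1,L_2,L_3$ in $\mathbb{F}_q^3$ and a non-commuting subset of $\mathcal{Q}$ contained in $L_1\cup L_2\cup L_3$ of cardinality at least $3q-3$. Further, if $q>3$ and $\mathrm{char}(\mathbb{F}_q)\ne 2$, there exists a non-commuting subset of $\mathcal{Q}$ of cardinality $3q-2$ which is not contained in a union of three lines.
   Context: A line in $\mathbb{F}_q^3$ is a set $\{p+tv: t\in\mathbb{F}_q\}$ with $v\ne 0$. A subset of $\mathcal{Q}$ is non-commuting if no two distinct elements of it commute. *)

theory Defs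
  imports Main "HOL-Library.Cardinality"
begin

definition commutes :: "'a::field \<times> 'a \<times> 'a \<Rightarrow> 'a \<times> 'a \<times> 'a \<Rightarrow> bool" where
  "commutes P Q = (case P of (x1, y1, z1) \<Rightarrow> case Q of (x2, y2, z2) \<Rightarrow>
      x1 * y2 - y1 * x2 = z1 - z2)"

definition non_commuting :: "('a::field \<times> 'a \<times> 'a) set \<Rightarrow> bool" where
  "non_commuting S = (\<forall>P\<in>S. \<forall>Q\<in>S. P \<noteq> Q \<longrightarrow> \<not> commutes P Q)"

definition is_line :: "('a::field \<times> 'a \<times> 'a) set \<Rightarrow> bool" where
  "is_line L = (\<exists>p1 p2 p3 v1 v2 v3. (v1, v2, v3) \<noteq> (0, 0, 0) \<and>
      L = {(p1 + t * v1, p2 + t * v2, p3 + t * v3) | t. True})"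

end

theory Submission
  imports Defs
begin

(* For pairwise distinct a, b, c take the three lines {y = a, z = b x}, {y = b, z = c x} and
   {y = c, z = a x}, each with its point on the plane x = 0 removed. Two points of one of them
   commute only if a = b, and a point of the first commutes with a point (s, b, c s) of the second
   only if s (a - c) = 0; so these 3(q - 1) points are pairwise non-commuting.
   For the second part take (a, b, c) = (-1, 0, 1) and add the point (0, y0, 0) with
   y0 \<notin> {-1, 0, 1}. No line lies inside the resulting set of 3q - 2 points (a line along which y
   varies reaches the value -y0, which differs from y0 when char \<noteq> 2), so each of three lines
   misses one of the q points it has and together they cover at most 3(q - 1) of them. *)

lemma commutes_sym: "commutes P Q = commutes Q P"
  by (auto simp: commutes_def algebra_simps split: prod.splits)

lemma non_commuting_Un:
  assumes "non_commuting A" "non_commuting B" "\<And>P Q. P \<in> A \<Longrightarrow> Q \<in> B \<Longrightarrow> \<not> commutes P Q"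
  shows "non_commuting (A \<union> B)"
  using assms commutes_sym unfolding non_commuting_def by blast

lemma non_commuting_insert:
  assumes "non_commuting A" "\<And>Q. Q \<in> A \<Longrightarrow> \<not> commutes P Q"
  shows "non_commuting (insert P A)"
  using non_commuting_Un[of "{P}" A] assms by (simp add: non_commuting_def)

lemma is_line_parametric:
  assumes "(v1, v2, v3) \<noteq> (0, 0, 0)"
  shows "is_line {(p1 + t * v1, p2 + t * v2, p3 + t * v3) | t. True}"
  unfolding is_line_def using assms by blast

lemma card_line_le:
  assumes "is_line (L :: ('a::{field,finite} \<times> 'a \<times> 'a) set)"
  shows "card L \<le> CARD('a)"
proof -
  obtain p1 p2 p3 v1 v2 v3 where "L = {(p1 + t * v1, p2 + t * v2, p3 + t * v3) | t. True}"
    using assms unfolding is_line_def by blast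
  then have "L = (\<lambda>t. (p1 + t * v1, p2 + t * v2, p3 + t * v3)) ` UNIV"
    by auto
  then have "card L \<le> card (UNIV :: 'a set)"
    by (simp add: card_image_le)
  then show ?thesis
    by simp
qed

lemma ex_line_through: "\<exists>L. is_line L \<and> P \<in> L"
proof -
  obtain p1 p2 p3 where "P = (p1, p2, p3)"
    by (cases P) blast
  then have "P \<in> {(p1 + t * 1, p2 + t * 0, p3 + t * 0) | t. True}"
    by force
  then show ?thesis
    using is_line_parametric[of 1 0 0] by auto
qed

lemma card_le_if_covered_by_lines:
  fixes S :: "('a::{field,finite} \<times> 'a \<times> 'a) set"
  assumes cover: "S \<subseteq> \<Union>\<L>" and lines: "\<And>L. L \<in> \<L> \<Longrightarrow> is_line L"
    and not_in: "\<And>L. is_line L \<Longrightarrow> \<not> L \<subseteq> S"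
  shows "card S \<le> card \<L> * (CARD('a) - 1)"
proof -
  have slice: "card (S \<inter> L) \<le> CARD('a) - 1" if "L \<in> \<L>" for L
  proof -
    have "S \<inter> L \<subset> L"
      using not_in[OF lines[OF that]] by blast
    then have "card (S \<inter> L) < card L"
      by (simp add: psubset_card_mono)
    then show ?thesis
      using card_line_le[OF lines[OF that]] by linarith
  qed
  have "S = (\<Union>L\<in>\<L>. S \<inter> L)"
    using cover by blast
  then have "card S \<le> (\<Sum>L\<in>\<L>. card (S \<inter> L))"
    using card_UN_le[of \<L> "\<lambda>L. S \<inter> L"] by simp
  also have "\<dots> \<le> card \<L> * (CARD('a) - 1)"
    using sum_bounded_above[of \<L> "\<lambda>L. card (S \<inter> L)"] slice by simp
  finally show ?thesis .
qed

definition punctured_line :: "'a::field \<Rightarrow> 'a \<Rightarrow> ('a \<times> 'a \<times> 'a) set" where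
  "punctured_line a b = {(t, a, b * t) | t. t \<noteq> 0}"

lemma mem_punctured_line [simp]:
  "(x, y, z) \<in> punctured_line a b \<longleftrightarrow> x \<noteq> 0 \<and> y = a \<and> z = b * x"
  unfolding punctured_line_def by auto

lemma punctured_line_subset_line: "\<exists>L. is_line L \<and> punctured_line a b \<subseteq> L"
proof -
  have "is_line {(0 + t * 1, a + t * 0, 0 + t * b) | t. True}"
    by (rule is_line_parametric) simp
  moreover have "punctured_line a b \<subseteq> {(0 + t * 1, a + t * 0, 0 + t * b) | t. True}"
    unfolding punctured_line_def by (auto simp: mult.commute)
  ultimately show ?thesis
    by blast
qed

lemma card_punctured_line: "card (punctured_line a b :: ('a::{field,finite} \<times> 'a \<times> 'a) set) = CARD('a) - 1"
proof -
  have "punctured_line a b = (\<lambda>t. (t, a, b * t)) ` (UNIV - {0})"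
    unfolding punctured_line_def by auto
  moreover have "inj (\<lambda>t::'a. (t, a, b * t))"
    by (simp add: inj_def)
  ultimately show ?thesis
    by (simp add: card_image inj_on_subset card_Diff_singleton)
qed

lemma punctured_lines_disjoint:
  assumes "a \<noteq> a'"
  shows "punctured_line a b \<inter> punctured_line a' b' = {}"
  using assms unfolding punctured_line_def by auto

lemma non_commuting_punctured_line:
  assumes "a \<noteq> b"
  shows "non_commuting (punctured_line a b)"
proof -
  have "commutes (t, a, b * t) (s, a, b * s) \<longleftrightarrow> (a - b) * (t - s) = 0" for t s
    unfolding commutes_def by (auto simp: algebra_simps)
  then show ?thesis
    using assms unfolding non_commuting_def punctured_line_def by auto
qed

lemma punctured_lines_not_commute:
  assumes "a \<noteq> c" "P \<in> punctured_line a b" "Q \<in> punctured_line b c"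
  shows "\<not> commutes P Q"
proof -
  obtain t s where "P = (t, a, b * t)" "Q = (s, b, c * s)" "s \<noteq> 0"
    using assms(2,3) unfolding punctured_line_def by auto
  moreover have "commutes (t, a, b * t) (s, b, c * s) \<longleftrightarrow> (a - c) * s = 0"
    unfolding commutes_def by (auto simp: algebra_simps)
  ultimately show ?thesis
    using assms(1) by simp
qed

lemma y_axis_point_not_commute:
  assumes "y \<noteq> b" "Q \<in> punctured_line a b"
  shows "\<not> commutes (0, y, 0) Q"
proof -
  obtain s where "Q = (s, a, b * s)" "s \<noteq> 0"
    using assms(2) unfolding punctured_line_def by auto
  moreover have "commutes (0, y, 0) (s, a, b * s) \<longleftrightarrow> (b - y) * s = 0"
    unfolding commutes_def by (auto simp: algebra_simps)
  ultimately show ?thesis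
    using assms(1) by simp
qed

definition punctured_cycle :: "'a::field \<Rightarrow> 'a \<Rightarrow> 'a \<Rightarrow> ('a \<times> 'a \<times> 'a) set" where
  "punctured_cycle a b c = punctured_line a b \<union> punctured_line b c \<union> punctured_line c a"

lemma non_commuting_punctured_cycle:
  assumes "a \<noteq> b" "b \<noteq> c" "c \<noteq> a"
  shows "non_commuting (punctured_cycle a b c)"
proof -
  have "\<not> commutes P Q" if "P \<in> punctured_line a b" "Q \<in> punctured_line b c" for P Q
    using punctured_lines_not_commute[OF _ that] assms(3) by blast
  moreover have "\<not> commutes P Q" if "P \<in> punctured_line b c" "Q \<in> punctured_line c a" for P Q
    using punctured_lines_not_commute[OF _ that] assms(1) by blast
  moreover have "\<not> commutes P Q" if "P \<in> punctured_line a b" "Q \<in> punctured_line c a" for P Q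
    using punctured_lines_not_commute[OF _ that(2,1)] assms(2) commutes_sym by blast
  ultimately show ?thesis
    unfolding punctured_cycle_def using assms
    by (intro non_commuting_Un non_commuting_punctured_line) auto
qed

lemma card_punctured_cycle:
  assumes "a \<noteq> b" "b \<noteq> c" "c \<noteq> a"
  shows "card (punctured_cycle a b c :: ('a::{field,finite} \<times> 'a \<times> 'a) set) = 3 * CARD('a) - 3"
proof -
  have "(punctured_line a b \<union> punctured_line b c) \<inter> punctured_line c a = {}"
    using punctured_lines_disjoint assms by blast
  moreover have "punctured_line a b \<inter> punctured_line b c = {}"
    using punctured_lines_disjoint assms by blast
  ultimately have "card (punctured_cycle a b c) =
      card (punctured_line a b) + card (punctured_line b c) + card (punctured_line c a)"
    unfolding punctured_cycle_def by (simp add: card_Un_disjoint)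
  then show ?thesis
    by (simp add: card_punctured_line)
qed

lemma punctured_cycle_z_unique:
  assumes "a \<noteq> b" "b \<noteq> c" "c \<noteq> a"
    and "(x, y, z) \<in> punctured_cycle a b c" "(x, y, z') \<in> punctured_cycle a b c"
  shows "z = z'"
  using assms unfolding punctured_cycle_def by auto

lemma punctured_cycle_covered_by_three_lines:
  "\<exists>L1 L2 L3. is_line L1 \<and> is_line L2 \<and> is_line L3 \<and> punctured_cycle a b c \<subseteq> L1 \<union> L2 \<union> L3"
  using punctured_line_subset_line[of a b] punctured_line_subset_line[of b c]
    punctured_line_subset_line[of c a]
  unfolding punctured_cycle_def by blast

lemma ex_not_mem_if_card_less:
  assumes "card A < CARD('a::finite)"
  shows "\<exists>x::'a. x \<notin> A"
  using assms by (metis UNIV_eq_I less_irrefl)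

lemma two_neq_zero_if_CHAR_neq_2:
  assumes "CHAR('a::field) \<noteq> 2"
  shows "(2::'a) \<noteq> 0"
proof
  assume "(2::'a) = 0"
  then have "CHAR('a) dvd 2"
    using of_nat_eq_0_iff_char_dvd[of 2, where 'a='a] by simp
  then have "CHAR('a) = 1 \<or> CHAR('a) = 2"
    using dvd_imp_le[of "CHAR('a)" 2] by (cases "CHAR('a)") (auto simp: le_Suc_eq)
  then show False
    using assms CHAR_not_1[where 'a='a] by simp
qed

lemma ex_non_commuting_set_on_three_lines:
  "\<exists>L1 L2 L3 (S :: ('a::{field,finite} \<times> 'a \<times> 'a) set).
     is_line L1 \<and> is_line L2 \<and> is_line L3 \<and> non_commuting S \<and>
     S \<subseteq> L1 \<union> L2 \<union> L3 \<and> card S \<ge> 3 * CARD('a) - 3"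
proof (cases "CARD('a) \<ge> 3")
  case True
  have "card {0, 1::'a} < CARD('a)"
    using True by simp
  then obtain e :: 'a where "e \<notin> {0, 1}"
    using ex_not_mem_if_card_less by blast
  moreover obtain L1 L2 L3 where "is_line L1" "is_line L2" "is_line L3"
      "punctured_cycle 0 1 e \<subseteq> L1 \<union> L2 \<union> L3"
    using punctured_cycle_covered_by_three_lines by blast
  ultimately show ?thesis
    using non_commuting_punctured_cycle[of 0 1 e] card_punctured_cycle[of 0 1 e]
    by (intro exI[of _ L1] exI[of _ L2] exI[of _ L3] exI[of _ "punctured_cycle 0 1 e"]) auto
next
  case False
  \<comment> \<open>Here q = 2, so 3q - 3 = 3.\<close>
  define S :: "('a \<times> 'a \<times> 'a) set" where "S = {(1, 0, 0), (0, 0, 1), (0, 1, 0)}"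
  have "non_commuting S"
    unfolding S_def non_commuting_def commutes_def by simp
  moreover have "3 * CARD('a) - 3 \<le> card S"
    using False unfolding S_def by simp
  moreover obtain L1 L2 L3 :: "('a \<times> 'a \<times> 'a) set" where "is_line L1" "is_line L2" "is_line L3"
      "(1, 0, 0) \<in> L1" "(0, 0, 1) \<in> L2" "(0, 1, 0) \<in> L3"
    using ex_line_through by metis
  moreover from this have "S \<subseteq> L1 \<union> L2 \<union> L3"
    unfolding S_def by blast
  ultimately show ?thesis
    by blast
qed

lemma no_line_in_punctured_cycle_plus_point:
  fixes y0 :: "'a::field"
  assumes two: "(2::'a) \<noteq> 0" and y0: "y0 \<notin> {-1, 0, 1}" and "is_line L"
  shows "\<not> L \<subseteq> insert (0, y0, 0) (punctured_cycle (-1) 0 1)"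
proof
  assume sub: "L \<subseteq> insert (0, y0, 0) (punctured_cycle (-1) 0 1)"
  obtain p1 p2 p3 v1 v2 v3 where v: "(v1, v2, v3) \<noteq> (0, 0, 0)"
    and L: "L = {(p1 + t * v1, p2 + t * v2, p3 + t * v3) | t. True}"
    using \<open>is_line L\<close> unfolding is_line_def by blast
  have on_L: "(p1 + t * v1, p2 + t * v2, p3 + t * v3) \<in> insert (0, y0, 0) (punctured_cycle (-1) 0 1)"
    for t
    using sub L by blast
  consider "v2 \<noteq> 0" | "v2 = 0" "p2 = y0" | "v2 = 0" "p2 \<noteq> y0"
    by blast
  then show False
  proof cases
    case 1
    \<comment> \<open>the line reaches the level y = -y0, which is none of the levels -1, 0, 1, y0 of the set\<close>
    have "y0 + y0 \<noteq> 0"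
      using two y0 by (simp flip: mult_2)
    then have "-y0 \<notin> {-1, 0, 1, y0}"
      using y0 by (auto simp: minus_equation_iff eq_neg_iff_add_eq_0)
    moreover have "p2 + (- y0 - p2) / v2 * v2 = -y0"
      using 1 by simp
    ultimately show False
      using on_L[of "(- y0 - p2) / v2"] by (auto simp: punctured_cycle_def)
  next
    case 2
    then have "(p1, p3) = (0, 0)" "(p1 + v1, p3 + v3) = (0, 0)"
      using on_L[of 0] on_L[of 1] y0 by (auto simp: punctured_cycle_def)
    then show False
      using v 2 by simp
  next
    case 3
    have "v1 = 0"
    proof (rule ccontr)
      assume "v1 \<noteq> 0"
      then have "p1 + (- p1 / v1) * v1 = 0"
        by simp
      then show False
        using on_L[of "- p1 / v1"] 3 by (auto simp: punctured_cycle_def)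
    qed
    then have "(p1, p2, p3) \<in> punctured_cycle (-1) 0 1" "(p1, p2, p3 + v3) \<in> punctured_cycle (-1) 0 1"
      using on_L[of 0] on_L[of 1] 3 by auto
    then have "p3 = p3 + v3"
      using two by (intro punctured_cycle_z_unique) (auto simp: eq_neg_iff_add_eq_0)
    then show False
      using v 3 \<open>v1 = 0\<close> by simp
  qed
qed

lemma ex_non_commuting_set_not_on_three_lines:
  assumes "CARD('a::{field,finite}) > 3" and two: "(2::'a) \<noteq> 0"
  shows "\<exists>S :: ('a \<times> 'a \<times> 'a) set. non_commuting S \<and> card S = 3 * CARD('a) - 2 \<and>
           \<not> (\<exists>L1 L2 L3. is_line L1 \<and> is_line L2 \<and> is_line L3 \<and> S \<subseteq> L1 \<union> L2 \<union> L3)"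
proof -
  have "card {-1, 0, 1::'a} < CARD('a)"
    using assms(1) card_length[of "[-1, 0, 1::'a]"] by simp
  then obtain y0 :: 'a where y0: "y0 \<notin> {-1, 0, 1}"
    using ex_not_mem_if_card_less by blast
  define S where "S = insert (0, y0, 0) (punctured_cycle (-1) 0 (1::'a))"
  have levels_distinct: "(-1::'a) \<noteq> 0" "(0::'a) \<noteq> 1" "(1::'a) \<noteq> -1"
    using two by (auto simp: eq_neg_iff_add_eq_0)
  have "\<not> commutes (0, y0, 0) Q" if "Q \<in> punctured_cycle (-1) 0 1" for Q
    using that y0 y_axis_point_not_commute unfolding punctured_cycle_def by blast
  then have "non_commuting S"
    unfolding S_def by (intro non_commuting_insert non_commuting_punctured_cycle levels_distinct)
  moreover have "card S = 3 * CARD('a) - 2"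
    using card_punctured_cycle[OF levels_distinct] assms(1) unfolding S_def by (simp add: punctured_cycle_def)
  moreover have "\<not> S \<subseteq> L1 \<union> L2 \<union> L3"
    if "is_line L1" "is_line L2" "is_line L3" for L1 L2 L3
  proof
    assume "S \<subseteq> L1 \<union> L2 \<union> L3"
    then have "card S \<le> card {L1, L2, L3} * (CARD('a) - 1)"
      using that no_line_in_punctured_cycle_plus_point[OF two y0]
      unfolding S_def by (intro card_le_if_covered_by_lines) auto
    also have "\<dots> \<le> 3 * (CARD('a) - 1)"
      using card_length[of "[L1, L2, L3]"] by (intro mult_right_mono) auto
    finally show False
      using \<open>card S = 3 * CARD('a) - 2\<close> assms(1) by linarith
  qed
  ultimately show ?thesis
    by blast
qed

theorem lemma7p5:
  shows "(\<exists>L1 L2 L3 (S :: ('a::{field,finite} \<times> 'a \<times> 'a) set).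
            is_line L1 \<and> is_line L2 \<and> is_line L3 \<and> non_commuting S \<and>
            S \<subseteq> L1 \<union> L2 \<union> L3 \<and> card S \<ge> 3 * CARD('a) - 3)
       \<and> (CARD('a) > 3 \<and> CHAR('a) \<noteq> 2 \<longrightarrow>
            (\<exists>S :: ('a \<times> 'a \<times> 'a) set. non_commuting S \<and> card S = 3 * CARD('a) - 2 \<and>
               \<not> (\<exists>L1 L2 L3. is_line L1 \<and> is_line L2 \<and> is_line L3 \<and> S \<subseteq> L1 \<union> L2 \<union> L3)))"
  using ex_non_commuting_set_on_three_lines ex_non_commuting_set_not_on_three_lines
    two_neq_zero_if_CHAR_neq_2
  by blast

end
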